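(* Let $r\ge 1$ be an integer and let $\mathbf{C_r}$ be the poset with ground set $[r]^3$ in which $(x_1,y_1,z_1)\le (x_2,y_2,z_2)$ if and only if $z_1\le z_2$ and ($y_1<y_2$ or ($y_1=y_2$ and $x_1=x_2$)). Then every subposet $S$ of $\mathbf{C_r}$ with $|S|\ge 4r^2$ has dimension at least $3$.
   Context: $[r]$ denotes $\{0,1,\ldots,r-1\}$. A subposet of a poset $P$ is a subset of its ground set with the order induced from $P$. The dimension of a poset $P$ is the least integer $d$ such that there are $d$ linear extensions of $P$ whose intersection is $P$. *)

theory Defs
  imports Main
begin

text \<open>A (finite) poset is given by a ground set S and an order relation P \<subseteq> S \<times> S
  (as a set of pairs, (a,b) \<in> P meaning a \<le> b).\<close>

definition linear_extension :: "'a set \<Rightarrow> 'a rel \<Rightarrow> 'a rel \<Rightarrow> bool" where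
  "linear_extension S P L \<longleftrightarrow> linear_order_on S L \<and> P \<subseteq> L"

definition realizer :: "'a set \<Rightarrow> 'a rel \<Rightarrow> 'a rel set \<Rightarrow> bool" where
  "realizer S P Ls \<longleftrightarrow> finite Ls \<and> (\<forall>L\<in>Ls. linear_extension S P L) \<and> (S \<times> S) \<inter> \<Inter> Ls = P"

definition poset_dim :: "'a set \<Rightarrow> 'a rel \<Rightarrow> nat" where
  "poset_dim S P = (LEAST d. \<exists>Ls. realizer S P Ls \<and> card Ls = d)"

definition C_ground :: "nat \<Rightarrow> (nat \<times> nat \<times> nat) set" where
  "C_ground r = {(x, y, z). x < r \<and> y < r \<and> z < r}"

definition C_le :: "nat \<Rightarrow> (nat \<times> nat \<times> nat) rel" where
  "C_le r = {((x1, y1, z1), (x2, y2, z2)).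
      (x1, y1, z1) \<in> C_ground r \<and> (x2, y2, z2) \<in> C_ground r \<and>
      z1 \<le> z2 \<and> (y1 < y2 \<or> (y1 = y2 \<and> x1 = x2))}"

definition subposet_rel :: "'a rel \<Rightarrow> 'a set \<Rightarrow> 'a rel" where
  "subposet_rel P S = P \<inter> (S \<times> S)"

end

theory Submission
  imports Defs "HOL-Library.Product_Lexorder"
begin

text \<open>For fixed x and y call the points (x, y, z) of S a column and y its row. Three linear extensions
  suffice: order by (z, y, x), by (y, x, z) and by (y, -x, z). Now let two linear extensions
  realize S. If some point of S at height z lies in a row above y, then at most two columns of
  row y cross height z upwards (have points at heights \<le> z and > z): their lower points would be
  three legs below that point whose upper points avoid it, and two linear extensions cannot
  accommodate this. Dually for a row below y and columns crossing z downwards. So, apart from the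
  lowest point of every column (at most r^2) and the highest point of every column with a higher
  row at the same height (at most r(r - 1)), each height carries at most 2r points of S: at most
  two per row when several rows meet it, at most r when only one does. Hence |S| < 4r^2.\<close>

lemma linear_order_on_not_le:
  assumes "linear_order_on S L" "a \<in> S" "b \<in> S" "(a, b) \<notin> L"
  shows "(b, a) \<in> L"
  using assms unfolding linear_order_on_def partial_order_on_def preorder_on_def refl_on_def total_on_def
  by metis

lemma crossing_pairs_collapse:
  assumes L: "linear_order_on S L" and L': "linear_order_on S L'"
    and P: "P = (S \<times> S) \<inter> L \<inter> L'"
    and "(li, t) \<in> P" "(lj, t) \<in> P" "(li, hi) \<in> P" "(lj, hj) \<in> P"
    and "(t, hi) \<in> L" "(t, hj) \<in> L"
    and "(li, hj) \<notin> P" "(lj, hi) \<notin> P"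
  shows "hi = hj"
proof -
  have S: "li \<in> S" "lj \<in> S" "hi \<in> S" "hj \<in> S" using assms(4-7) P by auto
  have tL: "trans L" "trans L'" and aL': "antisym L'"
    using L L' by (auto simp: linear_order_on_def partial_order_on_def preorder_on_def)
  have "(li, hj) \<in> L" "(lj, hi) \<in> L"
    using assms(4,5,8,9) P tL(1) by (auto dest: transD)
  then have "(li, hj) \<notin> L'" "(lj, hi) \<notin> L'"
    using assms(10,11) P S by auto
  then have "(hj, li) \<in> L'" "(hi, lj) \<in> L'"
    using linear_order_on_not_le[OF L'] S by blast+
  then have "(hj, hi) \<in> L'" "(hi, hj) \<in> L'"
    using assms(6,7) P tL(2) by (auto dest: transD)
  then show "hi = hj" using aL' by (auto dest: antisymD)
qed

lemma realizer_card_le_2_cases: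
  assumes "realizer S P Ls" "card Ls \<le> 2"
  obtains "P = S \<times> S"
    | L1 L2 where "linear_order_on S L1" "linear_order_on S L2" "P = (S \<times> S) \<inter> L1 \<inter> L2"
proof (cases "Ls = {}")
  case True
  then show ?thesis using assms(1) that(1) by (simp add: realizer_def)
next
  case False
  have "finite Ls" using assms(1) by (simp add: realizer_def)
  then have "card Ls \<noteq> 0" using False by simp
  then have "card Ls = 1 \<or> card Ls = 2" using assms(2) by linarith
  then obtain L1 L2 where "Ls = {L1, L2}" by (auto simp: card_1_singleton_iff card_2_iff)
  then show ?thesis using assms(1) that(2) by (auto simp: realizer_def linear_extension_def Int_assoc)
qed

text \<open>Two of the three heads lie above t in the same extension L. Each of these two legs then
  lies below the other leg's head in L, hence above it in the other extension, and there the two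
  legs form a cycle.\<close>

lemma realizer_card_le_2_no_three_legs:
  fixes l h :: "nat \<Rightarrow> 'a"
  assumes "realizer S P Ls" "card Ls \<le> 2"
    and below: "\<And>i. i < 3 \<Longrightarrow> (l i, t) \<in> P"
    and leg: "\<And>i. i < 3 \<Longrightarrow> (l i, h i) \<in> P"
    and head: "\<And>i. i < 3 \<Longrightarrow> (h i, t) \<notin> P"
    and cross: "\<And>i j. i < 3 \<Longrightarrow> j < 3 \<Longrightarrow> i \<noteq> j \<Longrightarrow> (l i, h j) \<notin> P"
  shows False
  using assms(1,2)
proof (cases rule: realizer_card_le_2_cases)
  case 1
  then show False using below[of 0] leg[of 0] head[of 0] by auto
next
  case (2 L1 L2)
  have above: "(t, h i) \<in> L1 \<or> (t, h i) \<in> L2" if "i < 3" for i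
    using below[OF that] leg[OF that] head[OF that] 2
    by (auto intro: linear_order_on_not_le)
  have collapse: False if "(t, h i) \<in> L" "(t, h j) \<in> L" "L = L1 \<or> L = L2"
      "i < 3" "j < 3" "i \<noteq> j" for L i j
  proof -
    obtain L' where "linear_order_on S L" "linear_order_on S L'" "P = (S \<times> S) \<inter> L \<inter> L'"
      using 2 \<open>L = L1 \<or> L = L2\<close> by (auto simp: Int_ac)
    then have "h i = h j"
      using crossing_pairs_collapse[of S L L' P "l i" t "l j" "h i" "h j"]
        below[OF \<open>i < 3\<close>] below[OF \<open>j < 3\<close>] leg[OF \<open>i < 3\<close>] leg[OF \<open>j < 3\<close>]
        cross[OF \<open>i < 3\<close> \<open>j < 3\<close> \<open>i \<noteq> j\<close>] cross[OF \<open>j < 3\<close> \<open>i < 3\<close>] that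
      by blast
    then show False using cross[of i j] leg[of i] that by auto
  qed
  show False
    using above[of 0] above[of 1] above[of 2]
      collapse[where i = 0 and j = 1] collapse[where i = 0 and j = 2] collapse[where i = 1 and j = 2]
    by auto
qed

lemma realizer_converse:
  assumes "realizer S P Ls"
  shows "realizer S (P\<inverse>) (converse ` Ls)"
  using assms by (auto simp: realizer_def linear_extension_def)

lemma card_gt_2_obtains_inj:
  assumes "finite X" "2 < card X"
  obtains f :: "nat \<Rightarrow> 'a" where "f ` {..<3} \<subseteq> X" "inj_on f {..<3}"
  using card_le_inj[of "{..<3::nat}" X] assms that by auto

definition key_order :: "'a set \<Rightarrow> ('a \<Rightarrow> 'b::linorder) \<Rightarrow> 'a rel" where
  "key_order S key = {(p, q). p \<in> S \<and> q \<in> S \<and> key p \<le> key q}"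

lemma linear_order_on_key_order:
  assumes "inj_on key S"
  shows "linear_order_on S (key_order S key)"
  using assms unfolding key_order_def linear_order_on_def partial_order_on_def preorder_on_def
    refl_on_def total_on_def trans_def antisym_def
  by (auto dest: inj_onD)

lemma poset_dim_geI:
  assumes "realizer S P Ls0" and "\<And>Ls. realizer S P Ls \<Longrightarrow> d \<le> card Ls"
  shows "d \<le> poset_dim S P"
  unfolding poset_dim_def using assms by (auto intro: LeastI2_ex)

lemma C_ground_eq: "C_ground r = {..<r} \<times> {..<r} \<times> {..<r}"
  by (auto simp: C_ground_def)

lemma finite_subset_C_ground: "S \<subseteq> C_ground r \<Longrightarrow> finite S"
  by (auto simp: C_ground_eq intro: finite_subset)

lemma C_le_iff:
  "((x1, y1, z1), (x2, y2, z2)) \<in> subposet_rel (C_le r) S \<longleftrightarrow>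
     (x1, y1, z1) \<in> S \<and> (x2, y2, z2) \<in> S \<and> (x1, y1, z1) \<in> C_ground r \<and> (x2, y2, z2) \<in> C_ground r \<and>
     z1 \<le> z2 \<and> (y1 < y2 \<or> y1 = y2 \<and> x1 = x2)"
  by (auto simp: subposet_rel_def C_le_def)

lemma realizer_C_le:
  assumes "S \<subseteq> C_ground r"
  shows "realizer S (subposet_rel (C_le r) S)
    {key_order S (\<lambda>(x, y, z). (z, y, x)), key_order S (\<lambda>(x, y, z). (y, x, z)),
     key_order S (\<lambda>(x, y, z). (y, - int x, z))}" (is "realizer S ?P ?Ls")
proof -
  have "inj_on (\<lambda>(x, y, z). (z, y, x)) S" "inj_on (\<lambda>(x, y, z). (y, x, z)) S"
    "inj_on (\<lambda>(x, y, z). (y, - int x, z)) S"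
    by (auto simp: inj_on_def)
  then have "\<forall>L\<in>?Ls. linear_order_on S L"
    by (auto intro: linear_order_on_key_order)
  moreover have "\<forall>L\<in>?Ls. ?P \<subseteq> L"
    by (auto simp: key_order_def subposet_rel_def C_le_def)
  moreover have "(S \<times> S) \<inter> \<Inter> ?Ls = ?P"
    using assms by (auto simp: key_order_def subposet_rel_def C_le_def subset_iff)
  ultimately show ?thesis
    by (simp add: realizer_def linear_extension_def)
qed

definition cross_up :: "(nat \<times> nat \<times> nat) set \<Rightarrow> nat \<Rightarrow> nat \<Rightarrow> nat set" where
  "cross_up S y z = {x. \<exists>a b. (x, y, a) \<in> S \<and> (x, y, b) \<in> S \<and> a \<le> z \<and> z < b}"

definition cross_down :: "(nat \<times> nat \<times> nat) set \<Rightarrow> nat \<Rightarrow> nat \<Rightarrow> nat set" where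
  "cross_down S y z = {x. \<exists>a b. (x, y, a) \<in> S \<and> (x, y, b) \<in> S \<and> a < z \<and> z \<le> b}"

definition higher_at :: "(nat \<times> nat \<times> nat) set \<Rightarrow> nat \<Rightarrow> nat \<Rightarrow> bool" where
  "higher_at S y z \<longleftrightarrow> (\<exists>x' y'. y < y' \<and> (x', y', z) \<in> S)"

definition lower_at :: "(nat \<times> nat \<times> nat) set \<Rightarrow> nat \<Rightarrow> nat \<Rightarrow> bool" where
  "lower_at S y z \<longleftrightarrow> (\<exists>x' y'. y' < y \<and> (x', y', z) \<in> S)"

lemma cross_up_subset: "cross_up S y z \<subseteq> fst ` S"
  by (force simp: cross_up_def)

lemma cross_down_subset: "cross_down S y z \<subseteq> fst ` S"
  by (force simp: cross_down_def)

lemma cross_up_witnesses: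
  obtains a b where "\<forall>x\<in>cross_up S y z. (x, y, a x) \<in> S \<and> (x, y, b x) \<in> S \<and> a x \<le> z \<and> z < b x"
proof -
  have "\<forall>x\<in>cross_up S y z. \<exists>ab. (x, y, fst ab) \<in> S \<and> (x, y, snd ab) \<in> S \<and>
      fst ab \<le> z \<and> z < snd ab"
    by (auto simp: cross_up_def)
  then obtain g where "\<forall>x\<in>cross_up S y z. (x, y, fst (g x)) \<in> S \<and> (x, y, snd (g x)) \<in> S \<and>
      fst (g x) \<le> z \<and> z < snd (g x)"
    by (rule bchoice[THEN exE])
  then show ?thesis using that[of "fst \<circ> g" "snd \<circ> g"] by simp
qed

lemma cross_down_witnesses:
  obtains a b where "\<forall>x\<in>cross_down S y z. (x, y, a x) \<in> S \<and> (x, y, b x) \<in> S \<and> a x < z \<and> z \<le> b x"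
proof -
  have "\<forall>x\<in>cross_down S y z. \<exists>ab. (x, y, fst ab) \<in> S \<and> (x, y, snd ab) \<in> S \<and>
      fst ab < z \<and> z \<le> snd ab"
    by (auto simp: cross_down_def)
  then obtain g where "\<forall>x\<in>cross_down S y z. (x, y, fst (g x)) \<in> S \<and> (x, y, snd (g x)) \<in> S \<and>
      fst (g x) < z \<and> z \<le> snd (g x)"
    by (rule bchoice[THEN exE])
  then show ?thesis using that[of "fst \<circ> g" "snd \<circ> g"] by simp
qed

lemma card_cross_up_le_2:
  assumes R: "realizer S (subposet_rel (C_le r) S) Ls" "card Ls \<le> 2"
    and G: "S \<subseteq> C_ground r" and "higher_at S y z"
  shows "card (cross_up S y z) \<le> 2"
proof (rule ccontr)
  let ?P = "subposet_rel (C_le r) S"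
  assume "\<not> ?thesis"
  then have gt: "2 < card (cross_up S y z)" by simp
  have "finite (cross_up S y z)"
    using finite_subset_C_ground[OF G] by (intro finite_subset[OF cross_up_subset]) auto
  then obtain f :: "nat \<Rightarrow> nat" where f: "f ` {..<3} \<subseteq> cross_up S y z" "inj_on f {..<3}"
    using card_gt_2_obtains_inj gt by blast
  obtain a b where ab: "\<forall>x\<in>cross_up S y z. (x, y, a x) \<in> S \<and> (x, y, b x) \<in> S \<and> a x \<le> z \<and> z < b x"
    by (rule cross_up_witnesses)
  obtain xt yt where t: "y < yt" "(xt, yt, z) \<in> S" using \<open>higher_at S y z\<close> by (auto simp: higher_at_def)
  define l where "l i = (f i, y, a (f i))" for i
  define h where "h i = (f i, y, b (f i))" for i
  have col: "(f i, y, a (f i)) \<in> S" "(f i, y, b (f i)) \<in> S" "a (f i) \<le> z" "z < b (f i)" if "i < 3" for i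
    using ab f that by auto
  have legs: "(l i, (xt, yt, z)) \<in> ?P" "(l i, h i) \<in> ?P" "(h i, (xt, yt, z)) \<notin> ?P" if "i < 3" for i
    using col[OF that] t G unfolding l_def h_def C_le_iff by (auto simp: subset_iff)
  have cross: "(l i, h j) \<notin> ?P" if "i < 3" "j < 3" "i \<noteq> j" for i j
    using inj_onD[OF f(2), of i j] that unfolding l_def h_def C_le_iff by auto
  show False
    using realizer_card_le_2_no_three_legs[OF R, where l = l and h = h] legs cross by blast
qed

lemma card_cross_down_le_2:
  assumes R: "realizer S (subposet_rel (C_le r) S) Ls" "card Ls \<le> 2"
    and G: "S \<subseteq> C_ground r" and "lower_at S y z"
  shows "card (cross_down S y z) \<le> 2"
proof (rule ccontr)
  let ?P = "subposet_rel (C_le r) S"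
  assume "\<not> ?thesis"
  then have gt: "2 < card (cross_down S y z)" by simp
  have "finite (cross_down S y z)"
    using finite_subset_C_ground[OF G] by (intro finite_subset[OF cross_down_subset]) auto
  then obtain f :: "nat \<Rightarrow> nat" where f: "f ` {..<3} \<subseteq> cross_down S y z" "inj_on f {..<3}"
    using card_gt_2_obtains_inj gt by blast
  obtain a b where ab: "\<forall>x\<in>cross_down S y z. (x, y, a x) \<in> S \<and> (x, y, b x) \<in> S \<and> a x < z \<and> z \<le> b x"
    by (rule cross_down_witnesses)
  obtain xt yt where t: "yt < y" "(xt, yt, z) \<in> S" using \<open>lower_at S y z\<close> by (auto simp: lower_at_def)
  define l where "l i = (f i, y, b (f i))" for i
  define h where "h i = (f i, y, a (f i))" for i
  have col: "(f i, y, a (f i)) \<in> S" "(f i, y, b (f i)) \<in> S" "a (f i) < z" "z \<le> b (f i)" if "i < 3" for i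
    using ab f that by auto
  have legs: "(l i, (xt, yt, z)) \<in> ?P\<inverse>" "(l i, h i) \<in> ?P\<inverse>" "(h i, (xt, yt, z)) \<notin> ?P\<inverse>" if "i < 3" for i
    using col[OF that] t G unfolding l_def h_def by (auto simp: C_le_iff subset_iff)
  have cross: "(l i, h j) \<notin> ?P\<inverse>" if "i < 3" "j < 3" "i \<noteq> j" for i j
    using inj_onD[OF f(2), of i j] that unfolding l_def h_def by (auto simp: C_le_iff)
  have "card (converse ` Ls) \<le> 2"
    using card_image_le[of Ls converse] R by (simp add: realizer_def)
  then show False
    using realizer_card_le_2_no_three_legs[OF realizer_converse[OF R(1)], where l = l and h = h]
      legs cross by blast
qed

definition column_bottoms :: "(nat \<times> nat \<times> nat) set \<Rightarrow> (nat \<times> nat \<times> nat) set" where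
  "column_bottoms S = {(x, y, z). (x, y, z) \<in> S \<and> (\<forall>a<z. (x, y, a) \<notin> S)}"

definition exposed_tops :: "(nat \<times> nat \<times> nat) set \<Rightarrow> (nat \<times> nat \<times> nat) set" where
  "exposed_tops S = {(x, y, z). (x, y, z) \<in> S \<and> (\<forall>b>z. (x, y, b) \<notin> S) \<and> higher_at S y z}"

definition middle_points :: "(nat \<times> nat \<times> nat) set \<Rightarrow> (nat \<times> nat \<times> nat) set" where
  "middle_points S = S - column_bottoms S - exposed_tops S"

lemma card_column_bottoms_le:
  assumes "S \<subseteq> C_ground r"
  shows "card (column_bottoms S) \<le> r ^ 2"
proof -
  have "inj_on (\<lambda>(x, y, z). (x, y)) (column_bottoms S)"
    by (auto simp: inj_on_def column_bottoms_def) (metis linorder_neqE_nat)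
  moreover have "(\<lambda>(x, y, z). (x, y)) ` column_bottoms S \<subseteq> {..<r} \<times> {..<r}"
    using assms by (auto simp: column_bottoms_def C_ground_def)
  ultimately have "card (column_bottoms S) \<le> card ({..<r} \<times> {..<r})"
    by (rule card_inj_on_le) simp
  then show ?thesis by (simp add: card_cartesian_product power2_eq_square)
qed

lemma card_exposed_tops_le:
  assumes "S \<subseteq> C_ground r"
  shows "card (exposed_tops S) \<le> r * (r - 1)"
proof -
  have "inj_on (\<lambda>(x, y, z). (x, y)) (exposed_tops S)"
    by (auto simp: inj_on_def exposed_tops_def) (metis linorder_neqE_nat)
  moreover have "(\<lambda>(x, y, z). (x, y)) ` exposed_tops S \<subseteq> {..<r} \<times> {..<r - 1}"
    using assms by (fastforce simp: exposed_tops_def higher_at_def C_ground_def subset_iff)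
  ultimately have "card (exposed_tops S) \<le> card ({..<r} \<times> {..<r - 1})"
    by (rule card_inj_on_le) simp
  then show ?thesis by (simp add: card_cartesian_product)
qed

lemma middle_points_in_cross_down:
  assumes "(x, y, z) \<in> middle_points S" "lower_at S y z"
  shows "x \<in> cross_down S y z"
  using assms by (force simp: middle_points_def column_bottoms_def cross_down_def)

lemma middle_points_in_cross_up:
  assumes "(x, y, z) \<in> middle_points S" "higher_at S y z"
  shows "x \<in> cross_up S y z"
  using assms by (force simp: middle_points_def column_bottoms_def exposed_tops_def cross_up_def)

lemma card_middle_points_row_le_2:
  assumes up: "higher_at S y z \<Longrightarrow> card (cross_up S y z) \<le> 2"
    and down: "lower_at S y z \<Longrightarrow> card (cross_down S y z) \<le> 2"
    and "lower_at S y z \<or> higher_at S y z"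
    and fin: "finite S"
  shows "card {p \<in> middle_points S. snd p = (y, z)} \<le> 2"
proof -
  have fin_cross: "finite (cross_down S y z)" "finite (cross_up S y z)"
    using fin by (auto intro: finite_subset[OF cross_down_subset] finite_subset[OF cross_up_subset])
  consider "lower_at S y z" | "higher_at S y z" using assms(3) by blast
  then show ?thesis
  proof cases
    case 1
    then have "{p \<in> middle_points S. snd p = (y, z)} \<subseteq> (\<lambda>x. (x, y, z)) ` cross_down S y z"
      using middle_points_in_cross_down by force
    then show ?thesis
      using down[OF 1] card_image_le[OF fin_cross(1), of "\<lambda>x. (x, y, z)"] fin_cross
      by (meson card_mono finite_imageI le_trans)
  next
    case 2
    then have "{p \<in> middle_points S. snd p = (y, z)} \<subseteq> (\<lambda>x. (x, y, z)) ` cross_up S y z"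
      using middle_points_in_cross_up by force
    then show ?thesis
      using up[OF 2] card_image_le[OF fin_cross(2), of "\<lambda>x. (x, y, z)"] fin_cross
      by (meson card_mono finite_imageI le_trans)
  qed
qed

lemma card_middle_points_level_le:
  assumes G: "S \<subseteq> C_ground r"
    and up: "\<And>y. higher_at S y z \<Longrightarrow> card (cross_up S y z) \<le> 2"
    and down: "\<And>y. lower_at S y z \<Longrightarrow> card (cross_down S y z) \<le> 2"
  shows "card {p \<in> middle_points S. snd (snd p) = z} \<le> 2 * r"
proof (cases "\<exists>x0 y0. (x0, y0, z) \<in> S \<and> \<not> lower_at S y0 z \<and> \<not> higher_at S y0 z")
  case True
  then obtain y0 where y0: "\<forall>x y. (x, y, z) \<in> S \<longrightarrow> y = y0"
    by (metis higher_at_def linorder_neqE_nat lower_at_def)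
  have "{p \<in> middle_points S. snd (snd p) = z} \<subseteq> (\<lambda>x. (x, y0, z)) ` {..<r}"
    using G y0 by (auto simp: middle_points_def C_ground_def subset_iff image_iff)
  then have "card {p \<in> middle_points S. snd (snd p) = z} \<le> card {..<r}"
    by (meson card_image_le card_mono finite_imageI finite_lessThan le_trans)
  then show ?thesis by simp
next
  case False
  have fin: "finite (middle_points S)"
    using finite_subset_C_ground[OF G] by (simp add: middle_points_def)
  have "{p \<in> middle_points S. snd (snd p) = z} \<subseteq> (\<Union>y<r. {p \<in> middle_points S. snd p = (y, z)})"
    using G by (auto simp: middle_points_def C_ground_def subset_iff)
  then have "card {p \<in> middle_points S. snd (snd p) = z}
      \<le> card (\<Union>y<r. {p \<in> middle_points S. snd p = (y, z)})"
    using fin by (intro card_mono) auto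
  also have "\<dots> \<le> (\<Sum>y<r. card {p \<in> middle_points S. snd p = (y, z)})"
    by (rule card_UN_le) simp
  also have "\<dots> \<le> (\<Sum>y<r. 2)"
  proof (rule sum_mono)
    fix y
    show "card {p \<in> middle_points S. snd p = (y, z)} \<le> 2"
    proof (cases "\<exists>x. (x, y, z) \<in> S")
      case True
      then show ?thesis
        using False card_middle_points_row_le_2[OF up down _ finite_subset_C_ground[OF G]] by blast
    next
      case False
      then have "{p \<in> middle_points S. snd p = (y, z)} = {}"
        by (auto simp: middle_points_def)
      then show ?thesis by (metis card.empty zero_le)
    qed
  qed
  finally show ?thesis by simp
qed

lemma card_middle_points_le:
  assumes G: "S \<subseteq> C_ground r"
    and up: "\<And>y z. higher_at S y z \<Longrightarrow> card (cross_up S y z) \<le> 2"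
    and down: "\<And>y z. lower_at S y z \<Longrightarrow> card (cross_down S y z) \<le> 2"
  shows "card (middle_points S) \<le> 2 * r ^ 2"
proof -
  have fin: "finite (middle_points S)"
    using finite_subset_C_ground[OF G] by (simp add: middle_points_def)
  have "middle_points S \<subseteq> (\<Union>z<r. {p \<in> middle_points S. snd (snd p) = z})"
    using G by (auto simp: middle_points_def C_ground_def subset_iff)
  then have "card (middle_points S) \<le> card (\<Union>z<r. {p \<in> middle_points S. snd (snd p) = z})"
    using fin by (intro card_mono) auto
  also have "\<dots> \<le> (\<Sum>z<r. card {p \<in> middle_points S. snd (snd p) = z})"
    by (rule card_UN_le) simp
  also have "\<dots> \<le> (\<Sum>z<r. 2 * r)"
    by (intro sum_mono card_middle_points_level_le[OF G up down])
  finally show ?thesis by (simp add: power2_eq_square)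
qed

lemma card_lt_4_r_squared:
  assumes G: "S \<subseteq> C_ground r" and "r \<ge> 1"
    and up: "\<And>y z. higher_at S y z \<Longrightarrow> card (cross_up S y z) \<le> 2"
    and down: "\<And>y z. lower_at S y z \<Longrightarrow> card (cross_down S y z) \<le> 2"
  shows "card S < 4 * r ^ 2"
proof -
  have "S = column_bottoms S \<union> exposed_tops S \<union> middle_points S"
    by (auto simp: column_bottoms_def exposed_tops_def middle_points_def)
  then have "card S \<le> card (column_bottoms S) + card (exposed_tops S) + card (middle_points S)"
    by (metis card_Un_le add_le_mono1 le_trans)
  also have "\<dots> \<le> r ^ 2 + r * (r - 1) + 2 * r ^ 2"
    using card_column_bottoms_le[OF G] card_exposed_tops_le[OF G] card_middle_points_le[OF G up down]
    by linarith
  also have "\<dots> < 4 * r ^ 2"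
    using \<open>r \<ge> 1\<close> by (cases r) (auto simp: power2_eq_square)
  finally show ?thesis .
qed

theorem mainTheorem2:
  fixes r :: nat and S :: "(nat \<times> nat \<times> nat) set"
  assumes "r \<ge> 1"
    and "S \<subseteq> C_ground r"
    and "card S \<ge> 4 * r ^ 2"
  shows "poset_dim S (subposet_rel (C_le r) S) \<ge> 3"
proof (rule poset_dim_geI[OF realizer_C_le[OF assms(2)]])
  fix Ls assume R: "realizer S (subposet_rel (C_le r) S) Ls"
  show "3 \<le> card Ls"
  proof (rule ccontr)
    assume "\<not> 3 \<le> card Ls"
    then have "card Ls \<le> 2" by simp
    then have "card S < 4 * r ^ 2"
      using card_lt_4_r_squared[OF assms(2,1)] card_cross_up_le_2[OF R] card_cross_down_le_2[OF R] assms(2)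
      by blast
    then show False using assms(3) by simp
  qed
qed

end
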